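(* Let $n\ge 1$ and let $G_1,\ldots,G_n$ be finite simple graphs with pairwise disjoint vertex sets. For each $1\le i\le n$ let $A_i\subseteq V(G_i)$ be a subset such that (a) $t_i:=\alpha(G_i)-\alpha(G_i\setminus A_i)$ is an odd integer with $t_i\ge 1$; (b) $\deg(G_i)-\deg(G_i\setminus A_i)=t_i-1$; (c) the leading coefficients of the $2n$ polynomials $h_{G_1}(t),\ldots,h_{G_n}(t),h_{G_1\setminus A_1}(t),\ldots,h_{G_n\setminus A_n}(t)$ are either all positive or all negative. Let $H_n$ be the graph with vertex set $V(H_n)=V(G_1)\cup\cdots\cup V(G_n)\cup\{y_1,\ldots,y_n\}$ (the $y_i$ new vertices) and edge set $E(H_n)=E(G_1)\cup\cdots\cup E(G_n)\cup\{\{y_i,x\}\mid x\in A_i,\ 1\le i\le n\}\cup\{\{y_i,y_j\}\mid i\ne j\}$. Let $R=\mathbb{K}[V(H_n)]$. Then $$\dim(R/I(H_n))=\sum_{i=1}^n\alpha(G_i)\quad\text{and}\quad \deg\big(h_{R/I(H_n)}(t)\big)=1+\sum_{i=1}^n\deg(G_i).$$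
   Context: All graphs are finite and simple. For a graph $G$ with vertex set $V(G)$, let $\mathbb{K}[V(G)]$ be the polynomial ring over a field $\mathbb{K}$ whose variables are the vertices, and let the edge ideal be $I(G)=(x_ix_j\mid \{x_i,x_j\}\in E(G))$ (so $I(G)=0$ if $G$ has no edges). For a homogeneous ideal $I$ of $S=\mathbb{K}[V(G)]$ (standard grading), the Hilbert series $\sum_{i\ge0}\dim_{\mathbb{K}}(S/I)_it^i$ can be written uniquely as $h_{S/I}(t)/(1-t)^{\dim(S/I)}$ with $h_{S/I}(t)\in\mathbb{Z}[t]$ and $h_{S/I}(1)\neq 0$; $h_{S/I}(t)$ is the $h$-polynomial. Write $h_G(t):=h_{\mathbb{K}[V(G)]/I(G)}(t)$ and $\deg(G):=\deg h_G(t)$. An independent set is a set of vertices with no edges among them; $\alpha(G)$ is the maximum size of an independent set (so $\dim \mathbb{K}[V(G)]/I(G)=\alpha(G)$). For $A\subseteq V(G)$, $G\setminus A$ denotes the induced subgraph on $V(G)\setminus A$ (with polynomial ring $\mathbb{K}[V(G)\setminus A]$); if $V(G)\setminus A=\emptyset$ then $\alpha(G\setminus A)=0$ and $h_{G\setminus A}(t)=1$. *)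

theory Defs
  imports "HOL-Library.Multiset" "HOL-Computational_Algebra.Polynomial_FPS"
begin

definition simple_graph :: "'a set \<Rightarrow> ('a \<Rightarrow> 'a \<Rightarrow> bool) \<Rightarrow> bool" where
  "simple_graph V E \<longleftrightarrow> finite V \<and> (\<forall>x y. E x y \<longrightarrow> E y x)
     \<and> (\<forall>x. \<not> E x x) \<and> (\<forall>x y. E x y \<longrightarrow> x \<in> V \<and> y \<in> V)"

definition indep_set :: "'a set \<Rightarrow> ('a \<Rightarrow> 'a \<Rightarrow> bool) \<Rightarrow> 'a set \<Rightarrow> bool" where
  "indep_set V E S \<longleftrightarrow> S \<subseteq> V \<and> (\<forall>x\<in>S. \<forall>y\<in>S. \<not> E x y)"

definition indep_num :: "'a set \<Rightarrow> ('a \<Rightarrow> 'a \<Rightarrow> bool) \<Rightarrow> nat" where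
  "indep_num V E = Max (card ` {S. indep_set V E S})"

text \<open>Monomials in the variables V are finite multisets over V.
  The K-dimension of (K[V]/I(G))_i is the number of degree-i monomials not in
  I(G) (they form a K-basis of the quotient, I(G) being a monomial ideal).\<close>
definition edge_monomial_ideal_mem :: "('a \<Rightarrow> 'a \<Rightarrow> bool) \<Rightarrow> 'a multiset \<Rightarrow> bool" where
  "edge_monomial_ideal_mem E m \<longleftrightarrow> (\<exists>x y. E x y \<and> {#x, y#} \<subseteq># m)"

definition hilbert_fun :: "'a set \<Rightarrow> ('a \<Rightarrow> 'a \<Rightarrow> bool) \<Rightarrow> nat \<Rightarrow> nat" where
  "hilbert_fun V E i =
     card {m. set_mset m \<subseteq> V \<and> size m = i \<and> \<not> edge_monomial_ideal_mem E m}"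

definition hilbert_series :: "'a set \<Rightarrow> ('a \<Rightarrow> 'a \<Rightarrow> bool) \<Rightarrow> int fps" where
  "hilbert_series V E = Abs_fps (\<lambda>i. int (hilbert_fun V E i))"

definition hilb_repr :: "'a set \<Rightarrow> ('a \<Rightarrow> 'a \<Rightarrow> bool) \<Rightarrow> nat \<Rightarrow> int poly \<Rightarrow> bool" where
  "hilb_repr V E d h \<longleftrightarrow>
     fps_of_poly h = hilbert_series V E * (1 - fps_X) ^ d \<and> poly h 1 \<noteq> 0"

text \<open>dim(K[V]/I(G)): the exponent d in the (unique) representation above.\<close>
definition quot_dim :: "'a set \<Rightarrow> ('a \<Rightarrow> 'a \<Rightarrow> bool) \<Rightarrow> nat" where
  "quot_dim V E = (THE d. \<exists>h. hilb_repr V E d h)"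

definition h_poly :: "'a set \<Rightarrow> ('a \<Rightarrow> 'a \<Rightarrow> bool) \<Rightarrow> int poly" where
  "h_poly V E = (THE h. \<exists>d. hilb_repr V E d h)"

definition hdeg :: "'a set \<Rightarrow> ('a \<Rightarrow> 'a \<Rightarrow> bool) \<Rightarrow> nat" where
  "hdeg V E = degree (h_poly V E)"

text \<open>The graph H_n: old vertices Inl x, new vertices y_i = Inr i (i < n).\<close>
definition H_verts :: "nat \<Rightarrow> (nat \<Rightarrow> 'a set) \<Rightarrow> ('a + nat) set" where
  "H_verts n Vs = Inl ` (\<Union>i<n. Vs i) \<union> Inr ` {..<n}"

fun H_edges :: "nat \<Rightarrow> (nat \<Rightarrow> 'a \<Rightarrow> 'a \<Rightarrow> bool) \<Rightarrow> (nat \<Rightarrow> 'a set)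
                 \<Rightarrow> ('a + nat) \<Rightarrow> ('a + nat) \<Rightarrow> bool" where
  "H_edges n Es As (Inl x) (Inl y) = (\<exists>i<n. Es i x y)"
| "H_edges n Es As (Inr i) (Inl x) = (i < n \<and> x \<in> As i)"
| "H_edges n Es As (Inl x) (Inr i) = (i < n \<and> x \<in> As i)"
| "H_edges n Es As (Inr i) (Inr j) = (i < n \<and> j < n \<and> i \<noteq> j)"

end

(*
  The monomials outside the edge ideal I(G) are those whose support is an independent set, and
  the monomials with support exactly S contribute (t/(1-t))^|S| to the Hilbert series. Hence
  dim K[V]/I(G) = alpha(G) and h_G(t) = sum of t^|S| (1-t)^(alpha(G) - |S|) over all independent S.

  An independent set of H_n either avoids all y_j, and is then a disjoint union of independent sets
  of the G_i, or contains exactly one y_j and avoids A_j. As alpha(G_j - A_j) < alpha(G_j), this gives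
  alpha(H_n) = sum alpha(G_i) and
    h_{H_n} = prod h_{G_i} + sum_j t (1-t)^(t_j - 1) h_{G_j - A_j} prod_{i ~= j} h_{G_i}.
  By (b) every summand of the second sum has degree 1 + sum deg(G_i); as t_j - 1 is even, (c) gives
  all their leading coefficients the same sign, so they do not cancel, while the product has
  smaller degree.
*)

theory Submission
  imports Defs "HOL-Library.Disjoint_Sets"
begin

section \<open>Hilbert series of edge ideals\<close>

definition indep_sets :: "'a set \<Rightarrow> ('a \<Rightarrow> 'a \<Rightarrow> bool) \<Rightarrow> 'a set set" where
  "indep_sets V E = {S. indep_set V E S}"

lemma finite_indep_sets: "finite V \<Longrightarrow> finite (indep_sets V E)"
  by (rule finite_subset[of _ "Pow V"]) (auto simp: indep_sets_def indep_set_def)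

lemma indep_sets_subset: "S \<in> indep_sets V E \<Longrightarrow> S \<subseteq> V"
  by (simp add: indep_sets_def indep_set_def)

lemma card_le_indep_num: "finite V \<Longrightarrow> S \<in> indep_sets V E \<Longrightarrow> card S \<le> indep_num V E"
  unfolding indep_num_def indep_sets_def
  by (rule Max_ge) (use finite_indep_sets[of V E] in \<open>auto simp: indep_sets_def\<close>)

lemma indep_num_attained: "finite V \<Longrightarrow> \<exists>S\<in>indep_sets V E. card S = indep_num V E"
proof -
  assume "finite V"
  then have "indep_num V E \<in> card ` indep_sets V E"
    unfolding indep_num_def indep_sets_def
    by (intro Max_in) (auto simp: indep_set_def intro: finite_indep_sets[unfolded indep_sets_def])
  then show ?thesis by auto
qed

lemma indep_num_eqI:
  assumes "finite V" "\<And>S. S \<in> indep_sets V E \<Longrightarrow> card S \<le> a" "S \<in> indep_sets V E" "card S = a"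
  shows "indep_num V E = a"
  using assms card_le_indep_num indep_num_attained by (metis le_antisym)

(* The series X/(1 - X); its |S|-th power counts the monomials with support exactly S. *)
definition fps_pos_powers :: "'a::comm_ring_1 fps" where
  "fps_pos_powers = Abs_fps (\<lambda>k. if k = 0 then 0 else 1)"

lemma fps_pos_powers_mult_1_minus_X: "fps_pos_powers * (1 - fps_X) = fps_X"
proof (rule fps_ext)
  fix k
  have "fps_pos_powers * (1 - fps_X) = fps_pos_powers - fps_X * (fps_pos_powers :: 'a fps)"
    by (simp add: algebra_simps)
  then show "fps_nth (fps_pos_powers * (1 - fps_X)) k = fps_nth (fps_X :: 'a fps) k"
    by (simp only:) (auto simp: fps_pos_powers_def fps_X_mult_nth fps_X_nth)
qed

lemma card_multisets_with_support_eq_nth: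
  assumes "finite S"
  shows "of_nat (card {m. set_mset m = S \<and> size m = k}) = fps_nth (fps_pos_powers ^ card S :: 'b::comm_ring_1 fps) k"
proof -
  have "fps_nth (fps_pos_powers ^ card S :: 'b fps) k
      = (\<Sum>m\<in>multisets_of_size S k. \<Prod>x\<in>S. fps_nth (fps_pos_powers :: 'b fps) (count m x))"
    using fps_prod_nth'[OF assms, of "\<lambda>_. fps_pos_powers" k] by simp
  also have "\<dots> = (\<Sum>m\<in>multisets_of_size S k. if S \<subseteq> set_mset m then 1 else 0)"
  proof (rule sum.cong[OF refl])
    fix m
    have "(\<Prod>x\<in>S. fps_nth (fps_pos_powers :: 'b fps) (count m x)) = (\<Prod>x\<in>S. if x \<in># m then 1 else 0)"
      by (rule prod.cong) (auto simp: fps_pos_powers_def count_eq_zero_iff)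
    also have "\<dots> = (if S \<subseteq> set_mset m then 1 else 0)"
      using assms by (induction S rule: finite_induct) auto
    finally show "(\<Prod>x\<in>S. fps_nth (fps_pos_powers :: 'b fps) (count m x)) = (if S \<subseteq> set_mset m then 1 else 0)" .
  qed
  also have "\<dots> = of_nat (card {m \<in> multisets_of_size S k. S \<subseteq> set_mset m})"
    using finite_multisets_of_size[OF assms] by (simp add: sum.If_cases Int_def)
  also have "{m \<in> multisets_of_size S k. S \<subseteq> set_mset m} = {m. set_mset m = S \<and> size m = k}"
    by (auto simp: multisets_of_size_def)
  finally show ?thesis ..
qed

lemma edge_monomial_ideal_mem_iff:
  assumes "irreflp E"
  shows "edge_monomial_ideal_mem E m \<longleftrightarrow> (\<exists>x\<in>#m. \<exists>y\<in>#m. E x y)"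
proof
  assume "edge_monomial_ideal_mem E m"
  then obtain x y where "E x y" "{#x, y#} \<subseteq># m" by (auto simp: edge_monomial_ideal_mem_def)
  moreover have "x \<in># m" "y \<in># m"
    using \<open>{#x, y#} \<subseteq># m\<close> by (auto dest: mset_subset_eqD)
  ultimately show "\<exists>x\<in>#m. \<exists>y\<in>#m. E x y" by blast
next
  assume "\<exists>x\<in>#m. \<exists>y\<in>#m. E x y"
  then obtain x y where xy: "x \<in># m" "y \<in># m" "E x y" by blast
  moreover have "x \<noteq> y" using xy(3) assms by (auto simp: irreflp_def)
  ultimately have "y \<in># m - {#x#}" by (simp add: in_diff_count)
  then have "{#x, y#} \<subseteq># m" using xy by (simp add: insert_subset_eq_iff)
  then show "edge_monomial_ideal_mem E m" using xy(3) by (auto simp: edge_monomial_ideal_mem_def)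
qed

lemma hilbert_fun_eq_sum_indep_sets:
  assumes "finite V" "irreflp E"
  shows "hilbert_fun V E k = (\<Sum>S\<in>indep_sets V E. card {m. set_mset m = S \<and> size m = k})"
proof -
  have "{m. set_mset m \<subseteq> V \<and> size m = k \<and> \<not> edge_monomial_ideal_mem E m}
      = (\<Union>S\<in>indep_sets V E. {m. set_mset m = S \<and> size m = k})"
    by (auto simp: edge_monomial_ideal_mem_iff[OF assms(2)] indep_sets_def indep_set_def)
  moreover have "finite {m. set_mset m = S \<and> size m = k}" if "S \<in> indep_sets V E" for S
  proof (rule finite_subset[OF _ finite_multisets_of_size])
    show "{m. set_mset m = S \<and> size m = k} \<subseteq> multisets_of_size S k"
      by (auto simp: multisets_of_size_def)
    show "finite S"
      using indep_sets_subset[OF that] assms(1) by (rule finite_subset)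
  qed
  ultimately show ?thesis
    unfolding hilbert_fun_def
    by (simp only:) (rule card_UN_disjoint, auto simp: finite_indep_sets[OF assms(1)])
qed

lemma hilbert_series_eq_sum_indep_sets:
  assumes "finite V" "irreflp E"
  shows "hilbert_series V E = (\<Sum>S\<in>indep_sets V E. fps_pos_powers ^ card S)"
proof (rule fps_ext)
  fix k
  have "finite S" if "S \<in> indep_sets V E" for S
    using indep_sets_subset[OF that] assms(1) by (rule finite_subset)
  then show "fps_nth (hilbert_series V E) k = fps_nth (\<Sum>S\<in>indep_sets V E. fps_pos_powers ^ card S) k"
    by (simp add: hilbert_series_def hilbert_fun_eq_sum_indep_sets[OF assms] fps_sum_nth
        card_multisets_with_support_eq_nth)
qed

(* Contribution of an independent k-set to h_G when alpha(G) = a. *)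
definition h_term :: "nat \<Rightarrow> nat \<Rightarrow> int poly" where
  "h_term a k = [:0, 1:] ^ k * (1 - [:0, 1:]) ^ (a - k)"

lemma fps_of_poly_h_term:
  assumes "k \<le> a"
  shows "fps_of_poly (h_term a k) = fps_pos_powers ^ k * (1 - fps_X) ^ a"
proof -
  have "fps_pos_powers ^ k * (1 - fps_X) ^ a
      = (fps_pos_powers * (1 - fps_X)) ^ k * (1 - fps_X :: int fps) ^ (a - k)"
    using assms by (simp add: power_mult_distrib mult.assoc flip: power_add)
  then show ?thesis
    by (simp add: h_term_def fps_of_poly_simps fps_pos_powers_mult_1_minus_X)
qed

lemma fps_of_poly_sum_h_terms:
  assumes "finite V" "irreflp E"
  shows "fps_of_poly (\<Sum>S\<in>indep_sets V E. h_term (indep_num V E) (card S))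
       = hilbert_series V E * (1 - fps_X) ^ indep_num V E"
  by (simp add: hilbert_series_eq_sum_indep_sets[OF assms] fps_of_poly_sum sum_distrib_right
      fps_of_poly_h_term card_le_indep_num[OF assms(1)])

lemma poly_sum_h_terms_1_pos:
  assumes "finite V"
  shows "poly (\<Sum>S\<in>indep_sets V E. h_term (indep_num V E) (card S)) 1 > 0"
proof -
  obtain S0 where S0: "S0 \<in> indep_sets V E" "card S0 = indep_num V E"
    using indep_num_attained[OF assms] by blast
  have "poly (h_term (indep_num V E) (card S)) 1 = (if card S = indep_num V E then 1 else 0)"
    if "S \<in> indep_sets V E" for S
    using card_le_indep_num[OF assms that] by (simp add: h_term_def)
  then have "poly (\<Sum>S\<in>indep_sets V E. h_term (indep_num V E) (card S)) 1
      = of_nat (card {S \<in> indep_sets V E. card S = indep_num V E})"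
    by (simp add: poly_sum sum.If_cases finite_indep_sets[OF assms] Int_def)
  moreover have "card {S \<in> indep_sets V E. card S = indep_num V E} > 0"
    using S0 finite_indep_sets[OF assms] by (auto simp: card_gt_0_iff)
  ultimately show ?thesis by simp
qed

lemma order_1_one_minus_X_power: "order 1 ((1 - [:0, 1:]) ^ d :: int poly) = d"
proof -
  have "1 - [:0, 1:] = - [:-1, 1 :: int:]"
    by (simp add: one_pCons)
  moreover have "order 1 ((- [:-1, 1 :: int:]) ^ d) = d"
    by (cases "even d") (simp_all only: power_minus_even power_minus_odd order_uminus order_power_n_n not_False_eq_True)
  ultimately show ?thesis by simp
qed

(* Since h(1) and h'(1) are nonzero, d and d' are the multiplicities of the root 1 in the two
   sides of h (1 - X)^d' = h' (1 - X)^d. *)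
lemma hilb_repr_unique:
  assumes "hilb_repr V E d h" "hilb_repr V E d' h'"
  shows "d = d' \<and> h = h'"
proof -
  let ?q = "1 - [:0, 1:] :: int poly"
  have "fps_of_poly (h * ?q ^ d') = fps_of_poly (h' * ?q ^ d)"
    using assms by (simp add: hilb_repr_def fps_of_poly_simps ac_simps)
  then have eq: "h * ?q ^ d' = h' * ?q ^ d"
    by (simp only: fps_of_poly_eq_iff)
  have "h \<noteq> 0" "h' \<noteq> 0" "poly h 1 \<noteq> 0" "poly h' 1 \<noteq> 0"
    using assms by (auto simp: hilb_repr_def)
  moreover have "?q \<noteq> 0"
    by (simp add: one_pCons)
  ultimately have "order 1 (h * ?q ^ d') = d'" "order 1 (h' * ?q ^ d) = d"
    by (simp_all add: order_mult order_0I order_1_one_minus_X_power)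
  with eq have "d = d'" by simp
  with eq \<open>?q \<noteq> 0\<close> show ?thesis by simp
qed

lemma hilb_repr_indep_num:
  assumes "finite V" "irreflp E"
  shows "hilb_repr V E (indep_num V E) (\<Sum>S\<in>indep_sets V E. h_term (indep_num V E) (card S))"
  using fps_of_poly_sum_h_terms[OF assms] poly_sum_h_terms_1_pos[OF assms(1), of E]
  by (simp add: hilb_repr_def)

lemma quot_dim_eq_indep_num:
  assumes "finite V" "irreflp E"
  shows "quot_dim V E = indep_num V E"
  unfolding quot_dim_def
  using hilb_repr_indep_num[OF assms] hilb_repr_unique by blast

lemma h_poly_eq_sum_h_terms:
  assumes "finite V" "irreflp E"
  shows "h_poly V E = (\<Sum>S\<in>indep_sets V E. h_term (indep_num V E) (card S))"
  unfolding h_poly_def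
  using hilb_repr_indep_num[OF assms] hilb_repr_unique by blast

section \<open>Disjoint unions of graphs\<close>

lemma bij_betw_Union_indep_sets:
  assumes disj: "disjoint_family_on Vs I"
    and edges: "\<And>i x y. i \<in> I \<Longrightarrow> Es i x y \<Longrightarrow> x \<in> Vs i \<and> y \<in> Vs i"
    and sub: "\<And>i. i \<in> I \<Longrightarrow> Ws i \<subseteq> Vs i"
  shows "bij_betw (\<lambda>F. \<Union>i\<in>I. F i) (PiE I (\<lambda>i. indep_sets (Ws i) (Es i)))
           (indep_sets (\<Union>i\<in>I. Ws i) (\<lambda>x y. \<exists>i\<in>I. Es i x y))"
proof (rule bij_betw_byWitness[where f' = "\<lambda>X. restrict (\<lambda>i. X \<inter> Ws i) I"])
  have part: "(\<Union>k\<in>I. F k) \<inter> Ws i = F i"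
    if "F \<in> PiE I (\<lambda>i. indep_sets (Ws i) (Es i))" "i \<in> I" for F i
  proof -
    have FW: "F k \<subseteq> Ws k" if "k \<in> I" for k
      using PiE_mem[OF \<open>F \<in> _\<close> that] indep_sets_subset by blast
    have "k = i" if "k \<in> I" "x \<in> F k" "x \<in> Ws i" for k x
      using disj that \<open>i \<in> I\<close> FW[OF \<open>k \<in> I\<close>] sub[OF \<open>k \<in> I\<close>] sub[OF \<open>i \<in> I\<close>]
      unfolding disjoint_family_on_def by blast
    then show ?thesis
      using \<open>i \<in> I\<close> FW[OF \<open>i \<in> I\<close>] by blast
  qed
  show "\<forall>F\<in>PiE I (\<lambda>i. indep_sets (Ws i) (Es i)). restrict (\<lambda>i. (\<Union>k\<in>I. F k) \<inter> Ws i) I = F"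
  proof
    fix F assume F: "F \<in> PiE I (\<lambda>i. indep_sets (Ws i) (Es i))"
    show "restrict (\<lambda>i. (\<Union>k\<in>I. F k) \<inter> Ws i) I = F"
      using part[OF F] PiE_arb[OF F] by (intro ext) auto
  qed
  show "\<forall>X\<in>indep_sets (\<Union>i\<in>I. Ws i) (\<lambda>x y. \<exists>i\<in>I. Es i x y). (\<Union>i\<in>I. restrict (\<lambda>i. X \<inter> Ws i) I i) = X"
    by (auto simp: indep_sets_def indep_set_def)
  show "(\<lambda>F. \<Union>i\<in>I. F i) ` PiE I (\<lambda>i. indep_sets (Ws i) (Es i))
      \<subseteq> indep_sets (\<Union>i\<in>I. Ws i) (\<lambda>x y. \<exists>i\<in>I. Es i x y)"
  proof clarify
    fix F assume F: "F \<in> PiE I (\<lambda>i. indep_sets (Ws i) (Es i))"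
    have FW: "F k \<subseteq> Ws k" if "k \<in> I" for k
      using PiE_mem[OF F that] indep_sets_subset by blast
    have same: "x \<in> F i" if "i \<in> I" "k \<in> I" "x \<in> F k" "x \<in> Vs i" for i k x
      using disj that FW[OF \<open>k \<in> I\<close>] sub[OF \<open>k \<in> I\<close>]
      unfolding disjoint_family_on_def by (cases "i = k") blast+
    have "\<not> Es i x y" if "i \<in> I" "k \<in> I" "l \<in> I" "x \<in> F k" "y \<in> F l" for i k l x y
    proof
      assume "Es i x y"
      then have "x \<in> F i" "y \<in> F i"
        using same edges that by blast+
      with \<open>Es i x y\<close> show False
        using PiE_mem[OF F \<open>i \<in> I\<close>] by (auto simp: indep_sets_def indep_set_def)
    qed
    moreover have "(\<Union>i\<in>I. F i) \<subseteq> (\<Union>i\<in>I. Ws i)"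
      using FW by blast
    ultimately show "(\<Union>i\<in>I. F i) \<in> indep_sets (\<Union>i\<in>I. Ws i) (\<lambda>x y. \<exists>i\<in>I. Es i x y)"
      by (auto simp: indep_sets_def indep_set_def)
  qed
  show "(\<lambda>X. restrict (\<lambda>i. X \<inter> Ws i) I) ` indep_sets (\<Union>i\<in>I. Ws i) (\<lambda>x y. \<exists>i\<in>I. Es i x y)
      \<subseteq> PiE I (\<lambda>i. indep_sets (Ws i) (Es i))"
    by (auto simp: indep_sets_def indep_set_def)
qed

lemma h_term_sum:
  assumes "\<And>i. i \<in> I \<Longrightarrow> k i \<le> a i"
  shows "h_term (\<Sum>i\<in>I. a i) (\<Sum>i\<in>I. k i) = (\<Prod>i\<in>I. h_term (a i) (k i))"
proof -
  have "(\<Sum>i\<in>I. a i) - (\<Sum>i\<in>I. k i) = (\<Sum>i\<in>I. a i - k i)"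
    using assms by (simp add: sum_subtractf_nat)
  then show ?thesis by (simp add: h_term_def power_sum prod.distrib)
qed

context
  fixes I :: "'i set" and Vs Ws :: "'i \<Rightarrow> 'a set" and Es :: "'i \<Rightarrow> 'a \<Rightarrow> 'a \<Rightarrow> bool"
  assumes finite_I: "finite I"
    and disj: "disjoint_family_on Vs I"
    and edges: "\<And>i x y. i \<in> I \<Longrightarrow> Es i x y \<Longrightarrow> x \<in> Vs i \<and> y \<in> Vs i"
    and sub: "\<And>i. i \<in> I \<Longrightarrow> Ws i \<subseteq> Vs i"
    and finite_Ws: "\<And>i. i \<in> I \<Longrightarrow> finite (Ws i)"
begin

lemma card_Union_indep_tuple:
  assumes "F \<in> PiE I (\<lambda>i. indep_sets (Ws i) (Es i))"
  shows "card (\<Union>i\<in>I. F i) = (\<Sum>i\<in>I. card (F i))"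
proof (rule card_UN_disjoint'[OF _ _ finite_I])
  have FW: "F i \<subseteq> Ws i" if "i \<in> I" for i
    using PiE_mem[OF assms that] by (rule indep_sets_subset)
  show "disjoint_family_on F I"
    unfolding disjoint_family_on_def
  proof (intro ballI impI)
    fix i j assume "i \<in> I" "j \<in> I" "i \<noteq> j"
    then have "Vs i \<inter> Vs j = {}" using disj by (simp add: disjoint_family_on_def)
    then show "F i \<inter> F j = {}"
      using FW sub \<open>i \<in> I\<close> \<open>j \<in> I\<close> by blast
  qed
  show "finite (F i)" if "i \<in> I" for i
    using finite_subset[OF FW[OF that] finite_Ws[OF that]] .
qed

lemma indep_num_Union:
  "indep_num (\<Union>i\<in>I. Ws i) (\<lambda>x y. \<exists>i\<in>I. Es i x y) = (\<Sum>i\<in>I. indep_num (Ws i) (Es i))"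
proof -
  note bij = bij_betw_Union_indep_sets[OF disj edges sub]
  have "\<forall>i\<in>I. \<exists>S. S \<in> indep_sets (Ws i) (Es i) \<and> card S = indep_num (Ws i) (Es i)"
    using indep_num_attained finite_Ws by blast
  then obtain F where F: "\<forall>i\<in>I. F i \<in> indep_sets (Ws i) (Es i) \<and> card (F i) = indep_num (Ws i) (Es i)"
    by (rule bchoice[elim_format]) blast
  then have F': "restrict F I \<in> PiE I (\<lambda>i. indep_sets (Ws i) (Es i))"
    by simp
  show ?thesis
  proof (rule indep_num_eqI)
    show "finite (\<Union>i\<in>I. Ws i)"
      using finite_I finite_Ws by simp
    show "card X \<le> (\<Sum>i\<in>I. indep_num (Ws i) (Es i))"
      if "X \<in> indep_sets (\<Union>i\<in>I. Ws i) (\<lambda>x y. \<exists>i\<in>I. Es i x y)" for X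
    proof -
      have "X \<in> (\<lambda>F. \<Union>i\<in>I. F i) ` PiE I (\<lambda>i. indep_sets (Ws i) (Es i))"
        using that by (subst bij_betw_imp_surj_on[OF bij])
      then obtain G where G: "G \<in> PiE I (\<lambda>i. indep_sets (Ws i) (Es i))" "X = (\<Union>i\<in>I. G i)"
        by (elim imageE)
      have "card X = (\<Sum>i\<in>I. card (G i))"
        unfolding G(2) by (rule card_Union_indep_tuple[OF G(1)])
      also have "\<dots> \<le> (\<Sum>i\<in>I. indep_num (Ws i) (Es i))"
        using PiE_mem[OF G(1)] finite_Ws by (intro sum_mono card_le_indep_num) simp_all
      finally show ?thesis .
    qed
    show "(\<Union>i\<in>I. restrict F I i) \<in> indep_sets (\<Union>i\<in>I. Ws i) (\<lambda>x y. \<exists>i\<in>I. Es i x y)"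
      using bij_betw_apply[OF bij F'] by simp
    show "card (\<Union>i\<in>I. restrict F I i) = (\<Sum>i\<in>I. indep_num (Ws i) (Es i))"
      using card_Union_indep_tuple[OF F'] F by simp
  qed
qed

lemma h_poly_Union:
  assumes irr: "\<And>i. i \<in> I \<Longrightarrow> irreflp (Es i)"
  shows "h_poly (\<Union>i\<in>I. Ws i) (\<lambda>x y. \<exists>i\<in>I. Es i x y) = (\<Prod>i\<in>I. h_poly (Ws i) (Es i))"
proof -
  let ?a = "\<lambda>i. indep_num (Ws i) (Es i)"
  let ?T = "PiE I (\<lambda>i. indep_sets (Ws i) (Es i))"
  have "finite (\<Union>i\<in>I. Ws i)"
    using finite_I finite_Ws by simp
  moreover have "irreflp (\<lambda>x y. \<exists>i\<in>I. Es i x y)"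
    using irr by (auto simp: irreflp_def)
  ultimately have "h_poly (\<Union>i\<in>I. Ws i) (\<lambda>x y. \<exists>i\<in>I. Es i x y)
      = (\<Sum>X\<in>indep_sets (\<Union>i\<in>I. Ws i) (\<lambda>x y. \<exists>i\<in>I. Es i x y). h_term (\<Sum>i\<in>I. ?a i) (card X))"
    by (simp add: h_poly_eq_sum_h_terms indep_num_Union)
  also have "\<dots> = (\<Sum>F\<in>?T. h_term (\<Sum>i\<in>I. ?a i) (card (\<Union>i\<in>I. F i)))"
    by (rule sum.reindex_bij_betw[OF bij_betw_Union_indep_sets[OF disj edges sub], symmetric])
  also have "\<dots> = (\<Sum>F\<in>?T. \<Prod>i\<in>I. h_term (?a i) (card (F i)))"
  proof (rule sum.cong[OF refl])
    fix F assume F: "F \<in> ?T"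
    have "card (F i) \<le> ?a i" if "i \<in> I" for i
      using PiE_mem[OF F that] finite_Ws[OF that] by (rule card_le_indep_num[rotated])
    then show "h_term (\<Sum>i\<in>I. ?a i) (card (\<Union>i\<in>I. F i)) = (\<Prod>i\<in>I. h_term (?a i) (card (F i)))"
      by (simp add: card_Union_indep_tuple[OF F] h_term_sum)
  qed
  also have "\<dots> = (\<Prod>i\<in>I. \<Sum>S\<in>indep_sets (Ws i) (Es i). h_term (?a i) (card S))"
    using finite_I finite_Ws finite_indep_sets by (intro prod_sum_PiE[symmetric]) auto
  also have "\<dots> = (\<Prod>i\<in>I. h_poly (Ws i) (Es i))"
    using finite_Ws irr by (intro prod.cong) (simp_all add: h_poly_eq_sum_h_terms)
  finally show ?thesis .
qed

end

section \<open>Adjoining the clique y_1, ..., y_n\<close>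

(* The y_j form a clique, so an independent set of H contains at most one of them, and y_j
   excludes exactly A_j. *)
lemma indep_sets_H:
  "indep_sets (H_verts n Vs) (H_edges n Es As)
   = (\<lambda>X. Inl ` X) ` indep_sets (\<Union>i<n. Vs i) (\<lambda>x y. \<exists>i<n. Es i x y)
     \<union> (\<Union>j<n. (\<lambda>X. insert (Inr j) (Inl ` X)) ` indep_sets ((\<Union>i<n. Vs i) - As j) (\<lambda>x y. \<exists>i<n. Es i x y))"
  (is "?L = ?N \<union> ?Y")
proof
  show "?L \<subseteq> ?N \<union> ?Y"
  proof
    fix S assume S: "S \<in> ?L"
    let ?X = "Inl -` S"
    have X: "?X \<in> indep_sets (\<Union>i<n. Vs i) (\<lambda>x y. \<exists>i<n. Es i x y)"
      using S by (auto simp: indep_sets_def indep_set_def H_verts_def) (metis H_edges.simps(1))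
    show "S \<in> ?N \<union> ?Y"
    proof (cases "\<exists>j. Inr j \<in> S")
      case False
      have "s \<in> range Inl" if "s \<in> S" for s
        using False that by (cases s) auto
      then have "S = Inl ` ?X"
        by (auto simp: image_vimage_eq)
      then show ?thesis using X by blast
    next
      case True
      then obtain j where j: "Inr j \<in> S" by blast
      then have "j < n" using S by (auto simp: indep_sets_def indep_set_def H_verts_def)
      have "k = j" if "Inr k \<in> S" for k
      proof -
        have "k < n" using S that by (auto simp: indep_sets_def indep_set_def H_verts_def)
        then have "\<not> H_edges n Es As (Inr j) (Inr k) \<Longrightarrow> k = j"
          using \<open>j < n\<close> by auto
        then show ?thesis using S j that unfolding indep_sets_def indep_set_def by blast
      qed
      then have "s \<in> insert (Inr j) (range Inl)" if "s \<in> S" for s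
        using that by (cases s) auto
      then have "S = insert (Inr j) (Inl ` ?X)"
        using j by (auto simp: image_vimage_eq)
      moreover have "?X \<in> indep_sets ((\<Union>i<n. Vs i) - As j) (\<lambda>x y. \<exists>i<n. Es i x y)"
        using S j X \<open>j < n\<close> by (auto simp: indep_sets_def indep_set_def) (metis H_edges.simps(2))
      ultimately show ?thesis using \<open>j < n\<close> by blast
    qed
  qed
  show "?N \<union> ?Y \<subseteq> ?L"
    by (auto simp: indep_sets_def indep_set_def H_verts_def)
qed

lemma sum_indep_sets_H:
  assumes "finite (\<Union>i<n. Vs i)"
  shows "(\<Sum>S\<in>indep_sets (H_verts n Vs) (H_edges n Es As). f S)
       = (\<Sum>X\<in>indep_sets (\<Union>i<n. Vs i) (\<lambda>x y. \<exists>i<n. Es i x y). f (Inl ` X))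
       + (\<Sum>j<n. \<Sum>X\<in>indep_sets ((\<Union>i<n. Vs i) - As j) (\<lambda>x y. \<exists>i<n. Es i x y).
            f (insert (Inr j) (Inl ` X)))"
proof -
  let ?E = "\<lambda>x y. \<exists>i<n. Es i x y"
  let ?Y = "\<lambda>j. (\<lambda>X. insert (Inr j) (Inl ` X)) ` indep_sets ((\<Union>i<n. Vs i) - As j) ?E"
  have fin: "finite (indep_sets ((\<Union>i<n. Vs i) - A) ?E)" for A
    using assms by (simp add: finite_indep_sets)
  have "(\<Sum>S\<in>indep_sets (H_verts n Vs) (H_edges n Es As). f S)
      = (\<Sum>S\<in>(\<lambda>X. Inl ` X) ` indep_sets (\<Union>i<n. Vs i) ?E. f S) + (\<Sum>S\<in>(\<Union>j<n. ?Y j). f S)"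
    unfolding indep_sets_H using fin[of "{}"] fin by (intro sum.union_disjoint) auto
  also have "(\<Sum>S\<in>(\<Union>j<n. ?Y j). f S) = (\<Sum>j<n. \<Sum>S\<in>?Y j. f S)"
    using fin by (intro sum.UNION_disjoint) auto
  also have "(\<Sum>S\<in>(\<lambda>X. Inl ` X) ` indep_sets (\<Union>i<n. Vs i) ?E. f S)
      = (\<Sum>X\<in>indep_sets (\<Union>i<n. Vs i) ?E. f (Inl ` X))"
    by (rule sum.reindex_cong[OF inj_on_image[OF inj_Inl]]) simp_all
  also have "(\<Sum>j<n. \<Sum>S\<in>?Y j. f S)
      = (\<Sum>j<n. \<Sum>X\<in>indep_sets ((\<Union>i<n. Vs i) - As j) ?E. f (insert (Inr j) (Inl ` X)))"
  proof (rule sum.cong[OF refl])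
    fix j
    show "(\<Sum>S\<in>?Y j. f S) = (\<Sum>X\<in>indep_sets ((\<Union>i<n. Vs i) - As j) ?E. f (insert (Inr j) (Inl ` X)))"
      by (rule sum.reindex_cong[where l = "\<lambda>X. insert (Inr j) (Inl ` X)"])
        (auto simp: inj_on_def indep_sets_def indep_set_def)
  qed
  finally show ?thesis by simp
qed

lemma card_insert_Inr_Inl_image: "finite X \<Longrightarrow> card (insert (Inr j) (Inl ` X)) = Suc (card X)"
  by (subst card_insert_disjoint) (auto simp: card_image)

lemma finite_H_verts: "finite (\<Union>i<n. Vs i) \<Longrightarrow> finite (H_verts n Vs)"
  by (simp add: H_verts_def)

lemma irreflp_H_edges:
  assumes "\<And>i. i < n \<Longrightarrow> irreflp (Es i)"
  shows "irreflp (H_edges n Es As)"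
  unfolding irreflp_def
proof
  fix s show "\<not> H_edges n Es As s s"
    using assms by (cases s) (auto simp: irreflp_def)
qed

lemma indep_num_H_eq_Union:
  assumes fin: "finite (\<Union>i<n. Vs i)"
    and smaller: "\<And>j. j < n \<Longrightarrow>
      indep_num ((\<Union>i<n. Vs i) - As j) (\<lambda>x y. \<exists>i<n. Es i x y) < indep_num (\<Union>i<n. Vs i) (\<lambda>x y. \<exists>i<n. Es i x y)"
  shows "indep_num (H_verts n Vs) (H_edges n Es As) = indep_num (\<Union>i<n. Vs i) (\<lambda>x y. \<exists>i<n. Es i x y)"
proof -
  let ?U = "\<Union>i<n. Vs i" and ?E = "\<lambda>x y. \<exists>i<n. Es i x y"
  obtain X where X: "X \<in> indep_sets ?U ?E" "card X = indep_num ?U ?E"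
    using indep_num_attained[OF fin] by blast
  show ?thesis
  proof (rule indep_num_eqI)
    show "finite (H_verts n Vs)"
      using fin by (rule finite_H_verts)
    show "Inl ` X \<in> indep_sets (H_verts n Vs) (H_edges n Es As)"
      using X(1) by (auto simp: indep_sets_H)
    show "card (Inl ` X) = indep_num ?U ?E"
      using X(2) by (simp add: card_image)
    fix S assume "S \<in> indep_sets (H_verts n Vs) (H_edges n Es As)"
    then consider (old) X where "X \<in> indep_sets ?U ?E" "S = Inl ` X"
      | (new) j X where "j < n" "X \<in> indep_sets (?U - As j) ?E" "S = insert (Inr j) (Inl ` X)"
      unfolding indep_sets_H by blast
    then show "card S \<le> indep_num ?U ?E"
    proof cases
      case old
      then show ?thesis using card_le_indep_num[OF fin] by (simp add: card_image)
    next
      case new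
      have "finite X"
        using new(2) fin by (meson finite_Diff finite_subset indep_sets_subset)
      then have "card S = Suc (card X)"
        using new(3) by (simp add: card_insert_Inr_Inl_image)
      moreover have "card X \<le> indep_num (?U - As j) ?E"
        using new(2) fin by (simp add: card_le_indep_num)
      ultimately show ?thesis using smaller[OF new(1)] by linarith
    qed
  qed
qed

lemma h_term_Suc:
  assumes "k \<le> b" "b < a"
  shows "h_term a (Suc k) = [:0, 1:] * (1 - [:0, 1:]) ^ (a - b - 1) * h_term b k"
proof -
  have "a - Suc k = (a - b - 1) + (b - k)"
    using assms by linarith
  then show ?thesis by (simp add: h_term_def power_add ac_simps)
qed

lemma h_poly_H_eq_Union:
  assumes fin: "finite (\<Union>i<n. Vs i)"
    and irr: "\<And>i. i < n \<Longrightarrow> irreflp (Es i)"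
    and smaller: "\<And>j. j < n \<Longrightarrow>
      indep_num ((\<Union>i<n. Vs i) - As j) (\<lambda>x y. \<exists>i<n. Es i x y) < indep_num (\<Union>i<n. Vs i) (\<lambda>x y. \<exists>i<n. Es i x y)"
  shows "h_poly (H_verts n Vs) (H_edges n Es As)
       = h_poly (\<Union>i<n. Vs i) (\<lambda>x y. \<exists>i<n. Es i x y)
       + (\<Sum>j<n. [:0, 1:] * (1 - [:0, 1:]) ^ (indep_num (\<Union>i<n. Vs i) (\<lambda>x y. \<exists>i<n. Es i x y)
                   - indep_num ((\<Union>i<n. Vs i) - As j) (\<lambda>x y. \<exists>i<n. Es i x y) - 1)
              * h_poly ((\<Union>i<n. Vs i) - As j) (\<lambda>x y. \<exists>i<n. Es i x y))"
proof -
  let ?U = "\<Union>i<n. Vs i" and ?E = "\<lambda>x y. \<exists>i<n. Es i x y"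
  let ?a = "indep_num ?U ?E" and ?b = "\<lambda>j. indep_num (?U - As j) ?E"
  have irrE: "irreflp ?E"
    using irr by (auto simp: irreflp_def)
  have "h_poly (H_verts n Vs) (H_edges n Es As)
      = (\<Sum>S\<in>indep_sets (H_verts n Vs) (H_edges n Es As). h_term ?a (card S))"
    using h_poly_eq_sum_h_terms[OF finite_H_verts[OF fin] irreflp_H_edges[OF irr]] indep_num_H_eq_Union[OF fin smaller]
    by simp
  also have "\<dots> = (\<Sum>X\<in>indep_sets ?U ?E. h_term ?a (card X))
      + (\<Sum>j<n. \<Sum>X\<in>indep_sets (?U - As j) ?E. [:0, 1:] * (1 - [:0, 1:]) ^ (?a - ?b j - 1) * h_term (?b j) (card X))"
  proof -
    have "card (Inl ` X :: ('a + nat) set) = card X" for X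
      by (simp add: card_image)
    moreover have "h_term ?a (card (insert (Inr j) (Inl ` X))) = [:0, 1:] * (1 - [:0, 1:]) ^ (?a - ?b j - 1) * h_term (?b j) (card X)"
      if "j < n" "X \<in> indep_sets (?U - As j) ?E" for j X
    proof -
      have "finite X"
        using that(2) fin by (meson finite_Diff finite_subset indep_sets_subset)
      then have "card (insert (Inr j) (Inl ` X)) = Suc (card X)"
        by (rule card_insert_Inr_Inl_image)
      moreover have "card X \<le> ?b j"
        using that(2) fin by (simp add: card_le_indep_num)
      ultimately show ?thesis
        using smaller[OF that(1)] by (simp add: h_term_Suc)
    qed
    ultimately show ?thesis
      by (simp add: sum_indep_sets_H[OF fin])
  qed
  also have "\<dots> = h_poly ?U ?E + (\<Sum>j<n. [:0, 1:] * (1 - [:0, 1:]) ^ (?a - ?b j - 1) * h_poly (?U - As j) ?E)"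
    using fin irrE by (simp add: h_poly_eq_sum_h_terms sum_distrib_left)
  finally show ?thesis .
qed

section \<open>Degree of the h-polynomial\<close>

lemma sum_if_eq_plus:
  fixes f g :: "'i \<Rightarrow> 'a::comm_monoid_add"
  assumes "finite I" "j \<in> I"
  shows "(\<Sum>i\<in>I. if i = j then g i else f i) + f j = (\<Sum>i\<in>I. f i) + g j"
  using assms by (simp add: sum.delta_remove sum.remove ac_simps)

lemma prod_pos_sign:
  fixes c :: "'i \<Rightarrow> 'a::linordered_idom"
  assumes "\<And>i. i \<in> I \<Longrightarrow> 0 < s * c i"
  shows "0 < s ^ card I * (\<Prod>i\<in>I. c i)"
proof -
  have "s ^ card I * (\<Prod>i\<in>I. c i) = (\<Prod>i\<in>I. s * c i)"
    by (simp add: prod.distrib)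
  also have "\<dots> > 0"
    using assms by (rule prod_pos)
  finally show ?thesis .
qed

lemma degree_sum_same_sign:
  fixes p :: "'i \<Rightarrow> 'a::linordered_idom poly"
  assumes "finite J" "J \<noteq> {}"
    and deg: "\<And>j. j \<in> J \<Longrightarrow> degree (p j) = d"
    and sign: "\<And>j. j \<in> J \<Longrightarrow> 0 < s * lead_coeff (p j)"
  shows "degree (\<Sum>j\<in>J. p j) = d"
proof (rule antisym)
  show "degree (\<Sum>j\<in>J. p j) \<le> d"
    using assms(1) deg by (intro degree_sum_le) simp_all
  have "s * coeff (\<Sum>j\<in>J. p j) d = (\<Sum>j\<in>J. s * lead_coeff (p j))"
    by (simp add: coeff_sum sum_distrib_left deg)
  also have "\<dots> > 0"
    using assms(1,2) sign by (rule sum_pos)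
  finally show "d \<le> degree (\<Sum>j\<in>J. p j)"
    by (intro le_degree) auto
qed

(* Each summand of the sum has degree 1 + sum (degree (h i)) and, e j being even, a leading
   coefficient of the sign of s ^ card I; so they do not cancel, and the product has lower degree. *)
lemma degree_prod_plus_cone_sum:
  fixes h g :: "'i \<Rightarrow> 'a::linordered_idom poly" and e :: "'i \<Rightarrow> nat"
  assumes "finite I" "I \<noteq> {}"
    and sign: "\<And>i. i \<in> I \<Longrightarrow> 0 < s * lead_coeff (h i) \<and> 0 < s * lead_coeff (g i)"
    and e: "\<And>j. j \<in> I \<Longrightarrow> even (e j) \<and> degree (h j) = degree (g j) + e j"
  shows "degree ((\<Prod>i\<in>I. h i)
           + (\<Sum>j\<in>I. [:0, 1:] * (1 - [:0, 1:]) ^ e j * (\<Prod>i\<in>I. if i = j then g i else h i)))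
       = 1 + (\<Sum>i\<in>I. degree (h i))"
proof -
  define Q where "Q j = (\<Prod>i\<in>I. if i = j then g i else h i)" for j
  have nonzero: "h i \<noteq> 0" "g i \<noteq> 0" if "i \<in> I" for i
    using sign[OF that] by auto
  have degree_Q: "degree (Q j) + e j = (\<Sum>i\<in>I. degree (h i))" if "j \<in> I" for j
  proof -
    have "degree (Q j) = (\<Sum>i\<in>I. if i = j then degree (g i) else degree (h i))"
      unfolding Q_def using nonzero by (subst degree_prod_eq_sum_degree) (auto intro: sum.cong)
    then show ?thesis
      using e[OF that] sum_if_eq_plus[OF assms(1) that, of "\<lambda>i. degree (g i)" "\<lambda>i. degree (h i)"] by simp
  qed
  have sign_Q: "0 < s ^ card I * lead_coeff (Q j)" for j
    unfolding Q_def lead_coeff_prod using sign by (intro prod_pos_sign) auto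
  have lead_coeff_X: "lead_coeff ([:0, 1:] :: 'a poly) = 1" "lead_coeff (1 - [:0, 1:] :: 'a poly) = -1"
    by (simp_all add: one_pCons)
  have degree_X: "degree ([:0, 1:] :: 'a poly) = 1" "degree (1 - [:0, 1:] :: 'a poly) = 1"
    and nonzero_X: "[:0, 1:] \<noteq> (0 :: 'a poly)" "[:0, 1:] \<noteq> (1 :: 'a poly)"
    by (simp_all add: one_pCons)
  let ?T = "\<lambda>j. [:0, 1:] * (1 - [:0, 1:]) ^ e j * Q j"
  have "degree (\<Sum>j\<in>I. ?T j) = 1 + (\<Sum>i\<in>I. degree (h i))"
  proof (rule degree_sum_same_sign[OF assms(1,2)])
    fix j assume "j \<in> I"
    then have "Q j \<noteq> 0"
      unfolding Q_def using nonzero assms(1) by (auto simp: prod_zero_iff)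
    then show "degree (?T j) = 1 + (\<Sum>i\<in>I. degree (h i))"
      using degree_Q[OF \<open>j \<in> I\<close>] by (simp add: degree_mult_eq degree_power_eq degree_X nonzero_X)
    have "lead_coeff (?T j) = lead_coeff [:0, 1:] * lead_coeff (1 - [:0, 1:]) ^ e j * lead_coeff (Q j)"
      by (simp only: lead_coeff_mult lead_coeff_power)
    also have "\<dots> = lead_coeff (Q j)"
      using e[OF \<open>j \<in> I\<close>] by (simp only: lead_coeff_X) simp
    finally show "0 < s ^ card I * lead_coeff (?T j)"
      using sign_Q[of j] by simp
  qed
  moreover have "degree (\<Prod>i\<in>I. h i) = (\<Sum>i\<in>I. degree (h i))"
    using nonzero by (simp add: degree_prod_eq_sum_degree)
  ultimately show ?thesis
    unfolding Q_def by (simp add: degree_add_eq_right)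
qed

locale disjoint_graph_family =
  fixes n :: nat and Vs :: "nat \<Rightarrow> 'a set" and Es :: "nat \<Rightarrow> 'a \<Rightarrow> 'a \<Rightarrow> bool"
  assumes graphs: "\<And>i. i < n \<Longrightarrow> simple_graph (Vs i) (Es i)"
    and disj: "\<And>i j. i < n \<Longrightarrow> j < n \<Longrightarrow> i \<noteq> j \<Longrightarrow> Vs i \<inter> Vs j = {}"
begin

lemma finite_Union: "finite (\<Union>i<n. Vs i)"
  using graphs by (simp add: simple_graph_def)

lemma irreflp_edges: "i < n \<Longrightarrow> irreflp (Es i)"
  using graphs by (simp add: simple_graph_def irreflp_def)

lemma indep_num_h_poly_Union_subsets:
  assumes "\<And>i. i < n \<Longrightarrow> Ws i \<subseteq> Vs i"
  shows "indep_num (\<Union>i<n. Ws i) (\<lambda>x y. \<exists>i<n. Es i x y) = (\<Sum>i<n. indep_num (Ws i) (Es i))"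
    and "h_poly (\<Union>i<n. Ws i) (\<lambda>x y. \<exists>i<n. Es i x y) = (\<Prod>i<n. h_poly (Ws i) (Es i))"
proof -
  have E: "(\<lambda>x y. \<exists>i\<in>{..<n}. Es i x y) = (\<lambda>x y. \<exists>i<n. Es i x y)"
    by auto
  have "disjoint_family_on Vs {..<n}"
    using disj by (auto simp: disjoint_family_on_def)
  moreover have "x \<in> Vs i \<and> y \<in> Vs i" if "i \<in> {..<n}" "Es i x y" for i x y
    using graphs that by (auto simp: simple_graph_def)
  moreover have "finite (Ws i)" if "i \<in> {..<n}" for i
    using graphs[of i] assms[of i] that by (auto simp: simple_graph_def intro: finite_subset)
  ultimately show "indep_num (\<Union>i<n. Ws i) (\<lambda>x y. \<exists>i<n. Es i x y) = (\<Sum>i<n. indep_num (Ws i) (Es i))"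
    and "h_poly (\<Union>i<n. Ws i) (\<lambda>x y. \<exists>i<n. Es i x y) = (\<Prod>i<n. h_poly (Ws i) (Es i))"
    using assms irreflp_edges indep_num_Union[of "{..<n}" Vs Es Ws] h_poly_Union[of "{..<n}" Vs Es Ws]
    unfolding E by auto
qed

lemma Union_minus:
  assumes "j < n" "A \<subseteq> Vs j"
  shows "(\<Union>i<n. Vs i) - A = (\<Union>i<n. if i = j then Vs i - A else Vs i)"
proof -
  have "x \<notin> A" if "i < n" "i \<noteq> j" "x \<in> Vs i" for i x
    using disj[OF that(1) assms(1) that(2)] assms(2) that(3) by blast
  then show ?thesis
    using assms by (auto split: if_splits)
qed

end

locale cone_construction = disjoint_graph_family +
  fixes As :: "nat \<Rightarrow> 'a set"
  assumes As_subset: "\<And>i. i < n \<Longrightarrow> As i \<subseteq> Vs i"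
    and indep_num_drop: "\<And>i. i < n \<Longrightarrow> indep_num (Vs i - As i) (Es i) < indep_num (Vs i) (Es i)"
begin

lemma indep_num_Union_minus:
  assumes "j < n"
  shows "indep_num ((\<Union>i<n. Vs i) - As j) (\<lambda>x y. \<exists>i<n. Es i x y) + indep_num (Vs j) (Es j)
       = (\<Sum>i<n. indep_num (Vs i) (Es i)) + indep_num (Vs j - As j) (Es j)"
proof -
  have "indep_num ((\<Union>i<n. Vs i) - As j) (\<lambda>x y. \<exists>i<n. Es i x y)
      = (\<Sum>i<n. if i = j then indep_num (Vs i - As i) (Es i) else indep_num (Vs i) (Es i))"
    unfolding Union_minus[OF assms As_subset[OF assms]]
    by (subst indep_num_h_poly_Union_subsets(1)) (auto intro: sum.cong)
  then show ?thesis
    using sum_if_eq_plus[of "{..<n}" j] assms by simp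
qed

lemma indep_num_Union_minus_less:
  "j < n \<Longrightarrow> indep_num ((\<Union>i<n. Vs i) - As j) (\<lambda>x y. \<exists>i<n. Es i x y)
     < indep_num (\<Union>i<n. Vs i) (\<lambda>x y. \<exists>i<n. Es i x y)"
  using indep_num_Union_minus[of j] indep_num_drop[of j] indep_num_h_poly_Union_subsets(1)[of Vs] by simp

lemma indep_num_H_eq_sum: "indep_num (H_verts n Vs) (H_edges n Es As) = (\<Sum>i<n. indep_num (Vs i) (Es i))"
  using indep_num_H_eq_Union[OF finite_Union indep_num_Union_minus_less] indep_num_h_poly_Union_subsets(1)[of Vs]
  by simp

lemma quot_dim_H: "quot_dim (H_verts n Vs) (H_edges n Es As) = (\<Sum>i<n. indep_num (Vs i) (Es i))"
  using quot_dim_eq_indep_num[OF finite_H_verts[OF finite_Union] irreflp_H_edges[OF irreflp_edges]]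
  by (simp add: indep_num_H_eq_sum)

lemma h_poly_H_eq_cone_sum:
  "h_poly (H_verts n Vs) (H_edges n Es As)
     = (\<Prod>i<n. h_poly (Vs i) (Es i))
     + (\<Sum>j<n. [:0, 1:] * (1 - [:0, 1:]) ^ (indep_num (Vs j) (Es j) - indep_num (Vs j - As j) (Es j) - 1)
            * (\<Prod>i<n. if i = j then h_poly (Vs i - As i) (Es i) else h_poly (Vs i) (Es i)))"
proof -
  let ?U = "\<Union>i<n. Vs i" and ?E = "\<lambda>x y. \<exists>i<n. Es i x y"
  have exponent: "indep_num ?U ?E - indep_num (?U - As j) ?E - 1
      = indep_num (Vs j) (Es j) - indep_num (Vs j - As j) (Es j) - 1" if "j < n" for j
    using indep_num_Union_minus[OF that] indep_num_h_poly_Union_subsets(1)[of Vs] by simp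
  have h_minus: "h_poly (?U - As j) ?E
      = (\<Prod>i<n. if i = j then h_poly (Vs i - As i) (Es i) else h_poly (Vs i) (Es i))" if "j < n" for j
    unfolding Union_minus[OF that As_subset[OF that]]
    by (subst indep_num_h_poly_Union_subsets(2)) (auto intro: prod.cong)
  have "h_poly (H_verts n Vs) (H_edges n Es As)
      = h_poly ?U ?E + (\<Sum>j<n. [:0, 1:] * (1 - [:0, 1:]) ^ (indep_num ?U ?E - indep_num (?U - As j) ?E - 1)
                         * h_poly (?U - As j) ?E)"
    by (rule h_poly_H_eq_Union[OF finite_Union irreflp_edges indep_num_Union_minus_less])
  also have "h_poly ?U ?E = (\<Prod>i<n. h_poly (Vs i) (Es i))"
    by (rule indep_num_h_poly_Union_subsets(2)) simp
  also have "(\<Sum>j<n. [:0, 1:] * (1 - [:0, 1:]) ^ (indep_num ?U ?E - indep_num (?U - As j) ?E - 1)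
                         * h_poly (?U - As j) ?E)
      = (\<Sum>j<n. [:0, 1:] * (1 - [:0, 1:]) ^ (indep_num (Vs j) (Es j) - indep_num (Vs j - As j) (Es j) - 1)
            * (\<Prod>i<n. if i = j then h_poly (Vs i - As i) (Es i) else h_poly (Vs i) (Es i)))"
    by (rule sum.cong) (simp_all only: lessThan_iff exponent h_minus)
  finally show ?thesis .
qed

end

theorem lemma3p2:
  fixes n :: nat
    and Vs :: "nat \<Rightarrow> 'a set"
    and Es :: "nat \<Rightarrow> 'a \<Rightarrow> 'a \<Rightarrow> bool"
    and As :: "nat \<Rightarrow> 'a set"
  assumes n: "n \<ge> 1"
    and graphs: "\<And>i. i < n \<Longrightarrow> simple_graph (Vs i) (Es i)"
    and disj: "\<And>i j. i < n \<Longrightarrow> j < n \<Longrightarrow> i \<noteq> j \<Longrightarrow> Vs i \<inter> Vs j = {}"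
    and Asub: "\<And>i. i < n \<Longrightarrow> As i \<subseteq> Vs i"
    and a: "\<And>i. i < n \<Longrightarrow>
              odd (int (indep_num (Vs i) (Es i)) - int (indep_num (Vs i - As i) (Es i)))
            \<and> int (indep_num (Vs i) (Es i)) - int (indep_num (Vs i - As i) (Es i)) \<ge> 1"
    and b: "\<And>i. i < n \<Longrightarrow>
              int (hdeg (Vs i) (Es i)) - int (hdeg (Vs i - As i) (Es i))
            = int (indep_num (Vs i) (Es i)) - int (indep_num (Vs i - As i) (Es i)) - 1"
    and c: "(\<forall>i<n. lead_coeff (h_poly (Vs i) (Es i)) > 0
                  \<and> lead_coeff (h_poly (Vs i - As i) (Es i)) > 0)
          \<or> (\<forall>i<n. lead_coeff (h_poly (Vs i) (Es i)) < 0
                  \<and> lead_coeff (h_poly (Vs i - As i) (Es i)) < 0)"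
  shows "quot_dim (H_verts n Vs) (H_edges n Es As) = (\<Sum>i<n. indep_num (Vs i) (Es i))
       \<and> hdeg (H_verts n Vs) (H_edges n Es As) = 1 + (\<Sum>i<n. hdeg (Vs i) (Es i))"
proof -
  let ?e = "\<lambda>i. indep_num (Vs i) (Es i) - indep_num (Vs i - As i) (Es i) - 1"
  have smaller: "\<And>i. i < n \<Longrightarrow> indep_num (Vs i - As i) (Es i) < indep_num (Vs i) (Es i)"
    using a by force
  have e: "even (?e i) \<and> degree (h_poly (Vs i) (Es i)) = degree (h_poly (Vs i - As i) (Es i)) + ?e i"
    if "i < n" for i
    using a[OF that] b[OF that] smaller[OF that] unfolding hdeg_def
    by (auto simp: of_nat_diff even_diff_nat)
  obtain s :: int where s: "\<And>i. i < n \<Longrightarrow>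
      0 < s * lead_coeff (h_poly (Vs i) (Es i)) \<and> 0 < s * lead_coeff (h_poly (Vs i - As i) (Es i))"
    using c by (metis mult_1 mult_minus1 neg_0_less_iff_less)
  interpret cone_construction n Vs Es As
    using graphs disj Asub smaller by unfold_locales
  have "degree (h_poly (H_verts n Vs) (H_edges n Es As)) = 1 + (\<Sum>i<n. degree (h_poly (Vs i) (Es i)))"
    unfolding h_poly_H_eq_cone_sum
  proof (rule degree_prod_plus_cone_sum)
    show "finite {..<n}" "{..<n} \<noteq> {}"
      using n by (simp_all add: lessThan_empty_iff)
  qed (use s e in simp_all)
  then show ?thesis
    using quot_dim_H by (simp add: hdeg_def)
qed

end
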